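(* For every ultimately periodic trace $\pi$, $\mathrm{cct}(\pi)$ is a complete consistent theory of LTL, and the map $\mathrm{cct}:\mathrm{UP}\to\mathrm{CCT}_{LTL}$ is a bijection.
   Context: Fix a finite nonempty $AP$. LTL formulae: $\varphi::=\bot\mid p\mid\neg\varphi\mid\varphi\lor\varphi\mid X\varphi\mid\varphi U\varphi$. Traces $\pi=a_0a_1\dots$ ($a_i\subseteq AP$), $\pi^i=a_ia_{i+1}\dots$; $\pi\models p$ iff $p\in a_0$, $\pi\models X\varphi$ iff $\pi^1\models\varphi$, $\pi\models\varphi U\psi$ iff $\exists i\ge0$: $\pi^i\models\psi$ and $\forall j<i$: $\pi^j\models\varphi$; $\bot,\neg,\lor$ as usual. Kripke structure $M=(S,I,T,\lambda)$: finite $S$, nonempty $I\subseteq S$, left-total $T\subseteq S\times S$, $\lambda:S\to2^{AP}$; traces of $M$: $\lambda(s_0)\lambda(s_1)\dots$ with $s_0\in I$, $(s_i,s_{i+1})\in T$. $M\models\varphi$ iff all its traces satisfy $\varphi$. $\mathrm{Cn}_{LTL}(X)$ = formulae satisfied by every Kripke structure satisfying $X$. Theory: $K=\mathrm{Cn}_{LTL}(K)$; consistent: $K$ is not the set of all formulae; complete: $\varphi\in K$ or $\neg\varphi\in K$ for every $\varphi$; $\mathrm{CCT}_{LTL}$ is the set of complete consistent LTL theories. $\mathrm{UP}$ is the set of ultimately periodic traces $\rho\sigma^\omega$ ($\rho,\sigma$ finite, $\sigma$ nonempty); $\mathrm{cct}(\pi):=\{\varphi\mid\pi\models\varphi\}$.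 *)

theory Defs
  imports Main
begin

datatype 'ap ltl = Bot | Prop 'ap | Neg "'ap ltl" | Or "'ap ltl" "'ap ltl"
  | Next "'ap ltl" | Until "'ap ltl" "'ap ltl"

type_synonym 'ap trace = "nat \<Rightarrow> 'ap set"

definition suffix :: "nat \<Rightarrow> 'ap trace \<Rightarrow> 'ap trace" where
  "suffix i \<pi> = (\<lambda>n. \<pi> (n + i))"

fun sat :: "'ap trace \<Rightarrow> 'ap ltl \<Rightarrow> bool" where
  "sat \<pi> Bot = False"
| "sat \<pi> (Prop p) = (p \<in> \<pi> 0)"
| "sat \<pi> (Neg \<phi>) = (\<not> sat \<pi> \<phi>)"
| "sat \<pi> (Or \<phi> \<psi>) = (sat \<pi> \<phi> \<or> sat \<pi> \<psi>)"
| "sat \<pi> (Next \<phi>) = sat (suffix 1 \<pi>) \<phi>"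
| "sat \<pi> (Until \<phi> \<psi>) =
     (\<exists>i. sat (suffix i \<pi>) \<psi> \<and> (\<forall>j<i. sat (suffix j \<pi>) \<phi>))"

text \<open>Kripke structures (S, I, T, lambda); states are natural numbers, which
  covers every finite Kripke structure up to isomorphism.\<close>
type_synonym 'ap kripke = "nat set \<times> nat set \<times> (nat \<times> nat) set \<times> (nat \<Rightarrow> 'ap set)"

definition is_kripke :: "'ap kripke \<Rightarrow> bool" where
  "is_kripke M = (case M of (S, I, T, lab) \<Rightarrow>
     finite S \<and> I \<noteq> {} \<and> I \<subseteq> S \<and> T \<subseteq> S \<times> S \<and> (\<forall>s\<in>S. \<exists>t. (s, t) \<in> T))"

definition traces :: "'ap kripke \<Rightarrow> 'ap trace set" where
  "traces M = (case M of (S, I, T, lab) \<Rightarrow>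
     {\<pi>. \<exists>s::nat \<Rightarrow> nat. s 0 \<in> I \<and> (\<forall>i. (s i, s (Suc i)) \<in> T) \<and> \<pi> = (\<lambda>i. lab (s i))})"

definition kmodels :: "'ap kripke \<Rightarrow> 'ap ltl \<Rightarrow> bool" where
  "kmodels M \<phi> = (\<forall>\<pi>\<in>traces M. sat \<pi> \<phi>)"

definition Cn :: "'ap ltl set \<Rightarrow> 'ap ltl set" where
  "Cn X = {\<phi>. \<forall>M. is_kripke M \<longrightarrow> (\<forall>\<psi>\<in>X. kmodels M \<psi>) \<longrightarrow> kmodels M \<phi>}"

definition is_theory :: "'ap ltl set \<Rightarrow> bool" where
  "is_theory K = (K = Cn K)"

definition consistent :: "'ap ltl set \<Rightarrow> bool" where
  "consistent K = (K \<noteq> UNIV)"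

definition complete :: "'ap ltl set \<Rightarrow> bool" where
  "complete K = (\<forall>\<phi>. \<phi> \<in> K \<or> Neg \<phi> \<in> K)"

definition CCT :: "'ap ltl set set" where
  "CCT = {K. is_theory K \<and> consistent K \<and> complete K}"

definition UP :: "'ap trace set" where
  "UP = {\<pi>. \<exists>\<rho> \<sigma>. \<sigma> \<noteq> [] \<and>
     \<pi> = (\<lambda>i. if i < length \<rho> then \<rho> ! i else \<sigma> ! ((i - length \<rho>) mod length \<sigma>))}"

definition cct :: "'ap trace \<Rightarrow> 'ap ltl set" where
  "cct \<pi> = {\<phi>. sat \<pi> \<phi>}"

end

theory Submission
  imports Defs
begin

text \<open>Distinct traces differ in some proposition at some position i, which
  the formula X^i p detects; hence cct is injective. An ultimately periodic trace
  is the only trace of a finite deterministic Kripke structure shaped like a lasso,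
  so every consequence of its theory holds on it, and its theory is closed.
  Conversely a consistent theory K has a model M; following a fixed successor
  choice from an initial state of M gives an orbit in a finite set, which is
  ultimately periodic, and the theory of that trace contains K and therefore
  equals K by completeness.\<close>

lemma sat_Next_funpow: "sat \<pi> ((Next ^^ i) \<phi>) = sat (suffix i \<pi>) \<phi>"
proof (induction i arbitrary: \<pi>)
  case 0
  then show ?case by (simp add: suffix_def)
next
  case (Suc i)
  have "suffix i (suffix 1 \<pi>) = suffix (Suc i) \<pi>" by (simp add: suffix_def add.commute)
  then show ?case using Suc by simp
qed

lemma sat_Next_funpow_Prop: "sat \<pi> ((Next ^^ i) (Prop p)) \<longleftrightarrow> p \<in> \<pi> i"
  by (simp add: sat_Next_funpow suffix_def)

lemma inj_cct: "inj cct"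
proof (rule injI)
  fix \<pi> \<pi>' :: "'ap trace"
  assume same: "cct \<pi> = cct \<pi>'"
  have "p \<in> \<pi> i \<longleftrightarrow> p \<in> \<pi>' i" for i p
    using same unfolding cct_def set_eq_iff
    by (metis mem_Collect_eq sat_Next_funpow_Prop)
  then show "\<pi> = \<pi>'" by blast
qed

text \<open>A sequence with a stem of length n followed by a loop of length p reads
  position i at index lasso_index n p i; lasso_step is the successor on indices.\<close>

definition lasso_index :: "nat \<Rightarrow> nat \<Rightarrow> nat \<Rightarrow> nat" where
  "lasso_index n p i = (if i < n then i else n + (i - n) mod p)"

definition lasso_step :: "nat \<Rightarrow> nat \<Rightarrow> nat \<Rightarrow> nat" where
  "lasso_step n p k = (if Suc k < n + p then Suc k else n)"

lemma lasso_index_0 [simp]: "lasso_index n p 0 = 0"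
  by (simp add: lasso_index_def)

lemma lasso_index_less: "0 < p \<Longrightarrow> lasso_index n p i < n + p"
  by (simp add: lasso_index_def)

lemma lasso_index_Suc:
  assumes "0 < p"
  shows "lasso_index n p (Suc i) = lasso_step n p (lasso_index n p i)"
proof (cases "i < n")
  case True
  then show ?thesis using assms by (auto simp: lasso_index_def lasso_step_def)
next
  case False
  then have "Suc i - n = Suc (i - n)" by simp
  moreover have "(i - n) mod p < p" using assms by simp
  ultimately show ?thesis using False
    by (auto simp: lasso_index_def lasso_step_def mod_Suc)
qed

lemma lasso_index_eq_funpow_lasso_step: "0 < p \<Longrightarrow> lasso_index n p i = (lasso_step n p ^^ i) 0"
  by (induction i) (simp_all add: lasso_index_Suc)

lemma lasso_step_less: "0 < p \<Longrightarrow> lasso_step n p k < n + p"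
  by (simp add: lasso_step_def)

lemma funpow_lasso_index_eq:
  fixes g :: "'a \<Rightarrow> 'a"
  assumes loop: "(g ^^ (n + p)) x = (g ^^ n) x" and "0 < p"
  shows "(g ^^ lasso_index n p i) x = (g ^^ i) x"
proof (induction i)
  case 0
  then show ?case by simp
next
  case (Suc i)
  show ?case
  proof (cases "Suc (lasso_index n p i) < n + p")
    case True
    then show ?thesis
      using Suc by (simp add: lasso_index_Suc[OF \<open>0 < p\<close>] lasso_step_def)
  next
    case False
    then have "Suc (lasso_index n p i) = n + p"
      using lasso_index_less[OF \<open>0 < p\<close>, of n i] by linarith
    then have "(g ^^ n) x = g ((g ^^ lasso_index n p i) x)"
      using loop by (metis funpow.simps(2) o_apply)
    then show ?thesis
      using False Suc by (simp add: lasso_index_Suc[OF \<open>0 < p\<close>] lasso_step_def)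
  qed
qed

lemma UP_eq_lassos:
  "(UP :: 'ap trace set) = {\<lambda>i. w ! lasso_index n (length w - n) i | w n. n < length w}"
proof (intro set_eqI iffI)
  fix \<pi> :: "'ap trace" assume "\<pi> \<in> UP"
  then obtain \<rho> \<sigma> where \<sigma>: "\<sigma> \<noteq> []"
    and \<pi>: "\<pi> = (\<lambda>i. if i < length \<rho> then \<rho> ! i else \<sigma> ! ((i - length \<rho>) mod length \<sigma>))"
    unfolding UP_def by blast
  have "\<pi> = (\<lambda>i. (\<rho> @ \<sigma>) ! lasso_index (length \<rho>) (length (\<rho> @ \<sigma>) - length \<rho>) i)"
    by (simp add: \<pi> fun_eq_iff lasso_index_def nth_append)
  moreover have "length \<rho> < length (\<rho> @ \<sigma>)" using \<sigma> by simp
  ultimately show "\<pi> \<in> {\<lambda>i. w ! lasso_index n (length w - n) i | w n. n < length w}"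
    by blast
next
  fix \<pi> :: "'ap trace" assume "\<pi> \<in> {\<lambda>i. w ! lasso_index n (length w - n) i | w n. n < length w}"
  then obtain w n where n: "n < length w" and \<pi>: "\<pi> = (\<lambda>i. w ! lasso_index n (length w - n) i)"
    by blast
  have "\<pi> = (\<lambda>i. if i < length (take n w) then take n w ! i
      else drop n w ! ((i - length (take n w)) mod length (drop n w)))"
    using n by (simp add: \<pi> fun_eq_iff lasso_index_def)
  moreover have "drop n w \<noteq> []" using n by simp
  ultimately show "\<pi> \<in> UP" unfolding UP_def by blast
qed

lemma funpow_orbit_in_UP:
  fixes g :: "'a \<Rightarrow> 'a"
  assumes "(g ^^ (n + p)) x = (g ^^ n) x" and "0 < p"
  shows "(\<lambda>i. f ((g ^^ i) x)) \<in> UP"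
proof -
  define w where "w = map (\<lambda>k. f ((g ^^ k) x)) [0..<n + p]"
  have "(\<lambda>i. f ((g ^^ i) x)) = (\<lambda>i. w ! lasso_index n (length w - n) i)"
    using funpow_lasso_index_eq[OF assms] lasso_index_less[OF \<open>0 < p\<close>]
    by (simp add: w_def)
  moreover have "n < length w" using \<open>0 < p\<close> by (simp add: w_def)
  ultimately show ?thesis unfolding UP_eq_lassos by blast
qed

definition deterministic_kripke ::
    "nat set \<Rightarrow> nat \<Rightarrow> (nat \<Rightarrow> nat) \<Rightarrow> (nat \<Rightarrow> 'ap set) \<Rightarrow> 'ap kripke" where
  "deterministic_kripke S s0 g lab = (S, {s0}, {(s, g s) | s. s \<in> S}, lab)"

lemma is_kripke_deterministic:
  "finite S \<Longrightarrow> s0 \<in> S \<Longrightarrow> g ` S \<subseteq> S \<Longrightarrow> is_kripke (deterministic_kripke S s0 g lab)"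
  by (auto simp: is_kripke_def deterministic_kripke_def)

lemma traces_deterministic:
  assumes "s0 \<in> S" "g ` S \<subseteq> S"
  shows "traces (deterministic_kripke S s0 g lab) = {\<lambda>i. lab ((g ^^ i) s0)}"
proof -
  have orbit: "(g ^^ i) s0 \<in> S" for i
    by (induction i) (use assms in auto)
  have paths: "{s. s 0 = s0 \<and> (\<forall>i. (s i, s (Suc i)) \<in> {(s, g s) | s. s \<in> S})}
      = {\<lambda>i. (g ^^ i) s0}"
  proof (intro set_eqI iffI)
    fix s assume "s \<in> {s. s 0 = s0 \<and> (\<forall>i. (s i, s (Suc i)) \<in> {(s, g s) | s. s \<in> S})}"
    then have "s i = (g ^^ i) s0" for i by (induction i) auto
    then show "s \<in> {\<lambda>i. (g ^^ i) s0}" by auto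
  qed (use orbit in auto)
  have "traces (deterministic_kripke S s0 g lab)
      = (\<lambda>s i. lab (s i)) ` {s. s 0 = s0 \<and> (\<forall>i. (s i, s (Suc i)) \<in> {(s, g s) | s. s \<in> S})}"
    unfolding traces_def deterministic_kripke_def by auto
  then show ?thesis unfolding paths by simp
qed

lemma UP_sole_trace_of_kripke:
  assumes "\<pi> \<in> UP"
  obtains M where "is_kripke M" "traces M = {\<pi>}"
proof -
  obtain w n where n: "n < length w" and \<pi>: "\<pi> = (\<lambda>i. w ! lasso_index n (length w - n) i)"
    using assms unfolding UP_eq_lassos by blast
  define p where "p = length w - n"
  have p: "0 < p" using n by (simp add: p_def)
  let ?M = "deterministic_kripke {..<n + p} 0 (lasso_step n p) (\<lambda>k. w ! k)"
  have closed: "lasso_step n p ` {..<n + p} \<subseteq> {..<n + p}"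
    using lasso_step_less[OF p] by auto
  have "is_kripke ?M"
    using p closed by (intro is_kripke_deterministic) auto
  moreover have "traces ?M = {\<pi>}"
    using p closed by (simp add: traces_deterministic \<pi> p_def[symmetric] lasso_index_eq_funpow_lasso_step)
  ultimately show thesis by (rule that)
qed

lemma kripke_has_UP_trace:
  assumes "is_kripke M"
  obtains \<pi> where "\<pi> \<in> traces M" "\<pi> \<in> UP"
proof -
  obtain S I T lab where M: "M = (S, I, T, lab)" by (cases M) auto
  have fin: "finite S" and I: "I \<noteq> {}" "I \<subseteq> S" and TS: "T \<subseteq> S \<times> S"
    and total: "\<forall>s\<in>S. \<exists>t. (s, t) \<in> T"
    using assms unfolding M is_kripke_def by auto
  obtain s0 where s0: "s0 \<in> I" using I by blast
  obtain g where g: "\<forall>s\<in>S. (s, g s) \<in> T" using total by metis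
  have orbit: "(g ^^ i) s0 \<in> S" for i
    by (induction i) (use s0 I g TS in auto)
  have "\<not> inj (\<lambda>i. (g ^^ i) s0)"
    using orbit fin by (metis finite_imageD finite_subset image_subsetI infinite_UNIV_nat)
  then obtain a b where "a < b" "(g ^^ a) s0 = (g ^^ b) s0"
    unfolding inj_def by (metis linorder_neqE_nat)
  then have "(\<lambda>i. lab ((g ^^ i) s0)) \<in> UP"
    by (intro funpow_orbit_in_UP[where n = a and p = "b - a"]) simp_all
  moreover have "(\<lambda>i. lab ((g ^^ i) s0)) \<in> traces M"
    unfolding M traces_def using s0 g orbit by (auto intro!: exI[of _ "\<lambda>i. (g ^^ i) s0"])
  ultimately show thesis using that by blast
qed

lemma subset_Cn: "X \<subseteq> Cn X"
  unfolding Cn_def by blast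

lemma consistent_cct: "consistent (cct \<pi>)"
  unfolding consistent_def cct_def by (metis UNIV_I mem_Collect_eq sat.simps(1))

lemma complete_cct: "complete (cct \<pi>)"
  unfolding complete_def cct_def by simp

lemma cct_sole_trace_in_CCT:
  assumes "is_kripke M" "traces M = {\<pi>}"
  shows "cct \<pi> \<in> CCT"
proof -
  have "Cn (cct \<pi>) \<subseteq> cct \<pi>"
  proof
    fix \<phi> assume "\<phi> \<in> Cn (cct \<pi>)"
    moreover have "\<forall>\<psi>\<in>cct \<pi>. kmodels M \<psi>"
      using assms(2) unfolding kmodels_def cct_def by auto
    ultimately have "kmodels M \<phi>" using assms(1) unfolding Cn_def by blast
    then show "\<phi> \<in> cct \<pi>" using assms(2) unfolding kmodels_def cct_def by blast
  qed
  then have "is_theory (cct \<pi>)" using subset_Cn unfolding is_theory_def by blast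
  then show ?thesis using consistent_cct complete_cct unfolding CCT_def by blast
qed

lemma complete_subset_cct_eq:
  assumes "complete K" "K \<subseteq> cct \<pi>"
  shows "K = cct \<pi>"
proof
  show "cct \<pi> \<subseteq> K"
  proof
    fix \<phi> assume "\<phi> \<in> cct \<pi>"
    then have "Neg \<phi> \<notin> K" using assms(2) unfolding cct_def by auto
    then show "\<phi> \<in> K" using assms(1) unfolding complete_def by blast
  qed
qed (rule assms(2))

lemma CCT_is_cct_of_UP:
  assumes "K \<in> CCT"
  obtains \<pi> where "\<pi> \<in> UP" "K = cct \<pi>"
proof -
  have "K = Cn K" "K \<noteq> UNIV" "complete K"
    using assms unfolding CCT_def is_theory_def consistent_def by auto
  then obtain M where M: "is_kripke M" "\<forall>\<psi>\<in>K. kmodels M \<psi>"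
    unfolding Cn_def by blast
  obtain \<pi> where \<pi>: "\<pi> \<in> traces M" "\<pi> \<in> UP" using kripke_has_UP_trace[OF M(1)] .
  have "K \<subseteq> cct \<pi>" using M(2) \<pi>(1) unfolding kmodels_def cct_def by blast
  then show thesis using that \<pi>(2) complete_subset_cct_eq \<open>complete K\<close> by blast
qed

theorem mainTheorem11:
  shows "(\<forall>\<pi>\<in>(UP :: ('ap::finite) trace set). cct \<pi> \<in> CCT)
         \<and> bij_betw (cct :: ('ap::finite) trace \<Rightarrow> 'ap ltl set) UP CCT"
proof -
  have "cct \<pi> \<in> CCT" if "\<pi> \<in> UP" for \<pi> :: "'ap trace"
    using UP_sole_trace_of_kripke[OF that] cct_sole_trace_in_CCT by metis
  moreover have "CCT \<subseteq> cct ` (UP :: 'ap trace set)"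
    using CCT_is_cct_of_UP by (metis image_eqI subsetI)
  ultimately show ?thesis
    using inj_cct by (auto simp: bij_betw_def intro: inj_on_subset)
qed

end
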